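(* Let $(Y,S,\gamma)$ be a deterministic machine with update function $f\colon Y\times S\to Y$ (so $\gamma(\cdot\mid y,s)=\delta_{f(y,s)}$), and let $(H,\psi_H,\kappa)$ be a consistent Bayesian filtering interpretation of $\gamma$. Fix $n\ge 1$. For $y\in Y$ let $\psi_{S^n,H_n}(\cdot\mid y)\in P(S^n\times H)$ be the joint law of $((s_1,\dots,s_n),h_n)$ under the process: $h_0\sim\psi_H(\cdot\mid y)$ and, for $k=1,\dots,n$, $(h_k,s_k)\sim\kappa(\cdot\mid h_{k-1})$ (each step conditionally on the previous hidden state). Let $\psi_{S^n}(\cdot\mid y)$ be its marginal on $S^n$, and let $f^n\colon Y\times S^n\to Y$ be the iterated update $f^n(y,(s_1,\dots,s_n))=f(\cdots f(f(y,s_1),s_2)\cdots,s_n)$. Then for every $y\in Y$ and all measurable $A\subseteq S^n$, $C\subseteq H$, $$\psi_{S^n,H_n}(A\times C\mid y)=\int_A\psi_H\big(C\mid f^n(y,\mathbf{s})\big)\,\psi_{S^n}(d\mathbf{s}\mid y),$$ i.e. the kernel $(y,\mathbf{s})\mapsto\psi_H(\cdot\mid f^n(y,\mathbf{s}))$ is a conditional (disintegration) of $\psi_{S^n,H_n}$ with respect to $S^n$.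
   Context: All measurable spaces are standard Borel; $P(X)$ denotes probability measures on $X$; a Markov kernel $k\colon X\to P(Z)$ is a measurable map, written $k(E\mid x)$. A machine $(Y,S,\gamma)$ consists of measurable spaces $Y,S$ and a Markov kernel $\gamma\colon Y\times S\to P(Y)$. Given a measurable space $H$ and Markov kernels $\psi_H\colon Y\to P(H)$, $\kappa\colon H\to P(H\times S)$, define $\psi_{S,H'}(E\mid y)=\int_H\kappa(E\mid h)\,\psi_H(dh\mid y)$ for measurable $E\subseteq H\times S$, and $\psi_S(A\mid y)=\psi_{S,H'}(H\times A\mid y)$. The triple $(H,\psi_H,\kappa)$ is a consistent Bayesian filtering interpretation of $\gamma$ if for all $y\in Y$ and measurable $C\subseteq H$, $A\subseteq S$, $B\subseteq Y$: $$\int_{C\times A}\gamma(B\mid y,s)\,\psi_{S,H'}(dh',ds\mid y)=\int_A\int_B\psi_H(C\mid y')\,\gamma(dy'\mid y,s)\,\psi_S(ds\mid y).$$ *)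

theory Defs
  imports "HOL-Probability.Probability"
begin

text \<open>Standard Borel space: Borel-isomorphic to a Borel subset of the reals
  (Kuratowski's characterisation of standard Borel spaces).\<close>
definition standard_borel :: "'a measure \<Rightarrow> bool" where
  "standard_borel M \<longleftrightarrow>
     (\<exists>B \<in> sets (borel :: real measure). \<exists>g h.
        g \<in> measurable M (restrict_space borel B) \<and>
        h \<in> measurable (restrict_space borel B) M \<and>
        (\<forall>x\<in>space M. h (g x) = x) \<and> (\<forall>r\<in>B. g (h r) = r))"

definition markov_kernel :: "'a measure \<Rightarrow> 'b measure \<Rightarrow> ('a \<Rightarrow> 'b measure) \<Rightarrow> bool" where
  "markov_kernel X Z k \<longleftrightarrow> k \<in> measurable X (prob_algebra Z)"

definition psi_SH :: "('y \<Rightarrow> 'h measure) \<Rightarrow> ('h \<Rightarrow> ('h \<times> 's) measure) \<Rightarrow> 'y \<Rightarrow> ('h \<times> 's) measure" where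
  "psi_SH psiH kappa y = psiH y \<bind> kappa"

definition psi_S :: "'s measure \<Rightarrow> ('y \<Rightarrow> 'h measure) \<Rightarrow> ('h \<Rightarrow> ('h \<times> 's) measure) \<Rightarrow> 'y \<Rightarrow> 's measure" where
  "psi_S Ms psiH kappa y = distr (psi_SH psiH kappa y) Ms snd"

definition consistent_BFI ::
  "'y measure \<Rightarrow> 's measure \<Rightarrow> 'h measure \<Rightarrow> ('y \<times> 's \<Rightarrow> 'y measure)
     \<Rightarrow> ('y \<Rightarrow> 'h measure) \<Rightarrow> ('h \<Rightarrow> ('h \<times> 's) measure) \<Rightarrow> bool" where
  "consistent_BFI My Ms Mh gamma psiH kappa \<longleftrightarrow>
     markov_kernel My Mh psiH \<and> markov_kernel Mh (Mh \<Otimes>\<^sub>M Ms) kappa \<and>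
     (\<forall>y\<in>space My. \<forall>C\<in>sets Mh. \<forall>A\<in>sets Ms. \<forall>B\<in>sets My.
        (\<integral>\<^sup>+ p \<in> C \<times> A. emeasure (gamma (y, snd p)) B \<partial>psi_SH psiH kappa y)
        = (\<integral>\<^sup>+ s \<in> A. (\<integral>\<^sup>+ y' \<in> B. emeasure (psiH y') C \<partial>gamma (y, s)) \<partial>psi_S Ms psiH kappa y))"

text \<open>Iterated update f^k(y, s) using s 0, ..., s (k-1) (i.e. s_1..s_k).\<close>
primrec iter_update :: "('y \<times> 's \<Rightarrow> 'y) \<Rightarrow> 'y \<Rightarrow> (nat \<Rightarrow> 's) \<Rightarrow> nat \<Rightarrow> 'y" where
  "iter_update f y s 0 = y"
| "iter_update f y s (Suc k) = f (iter_update f y s k, s k)"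

text \<open>Joint law of ((s_1,...,s_k), h_k), with s_i stored at index i-1,
  as a measure on S^k x H, S^k = PiM {..<k} (\<lambda>_. Ms).\<close>
primrec joint_law :: "'s measure \<Rightarrow> 'h measure \<Rightarrow> ('y \<Rightarrow> 'h measure) \<Rightarrow> ('h \<Rightarrow> ('h \<times> 's) measure)
     \<Rightarrow> nat \<Rightarrow> 'y \<Rightarrow> ((nat \<Rightarrow> 's) \<times> 'h) measure" where
  "joint_law Ms Mh psiH kappa 0 y =
     distr (psiH y) (PiM {..<0} (\<lambda>_. Ms) \<Otimes>\<^sub>M Mh) (\<lambda>h. (\<lambda>_. undefined, h))"
| "joint_law Ms Mh psiH kappa (Suc k) y =
     joint_law Ms Mh psiH kappa k y \<bind>
       (\<lambda>(ss, h). distr (kappa h) (PiM {..<Suc k} (\<lambda>_. Ms) \<Otimes>\<^sub>M Mh)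
                    (\<lambda>(h', s'). (ss(k := s'), h')))"

definition marginal_law :: "'s measure \<Rightarrow> 'h measure \<Rightarrow> ('y \<Rightarrow> 'h measure) \<Rightarrow> ('h \<Rightarrow> ('h \<times> 's) measure)
     \<Rightarrow> nat \<Rightarrow> 'y \<Rightarrow> (nat \<Rightarrow> 's) measure" where
  "marginal_law Ms Mh psiH kappa n y =
     distr (joint_law Ms Mh psiH kappa n y) (PiM {..<n} (\<lambda>_. Ms)) fst"

end

theory Submission
  imports Defs
begin

text \<open>For a deterministic machine, consistency (with \<open>B = Y\<close>) says that drawing \<open>(h', s)\<close>
  from \<open>\<psi>_{S,H'}(\<cdot> | y)\<close> is the same as drawing \<open>s\<close> from \<open>\<psi>_S(\<cdot> | y)\<close> and then \<open>h'\<close> from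
  \<open>\<psi>_H(\<cdot> | f(y, s))\<close>. By induction on \<open>k\<close>, the hidden state \<open>h_k\<close> given \<open>s_1, \<dots>, s_k\<close> is
  distributed as \<open>\<psi>_H(\<cdot> | f^k(y, s))\<close>: one more step of \<open>\<kappa>\<close> from such an \<open>h_k\<close> yields
  \<open>\<psi>_{S,H'}(\<cdot> | f^k(y, s))\<close>, which the one-step identity decomposes again. The induction is
  carried out for integrals of arbitrary nonnegative measurable functions, since the step from
  \<open>k\<close> to \<open>k + 1\<close> integrates a function that is not the indicator of a rectangle.\<close>

lemma iter_update_fun_upd: "j \<le> k \<Longrightarrow> iter_update f y (s(k := t)) j = iter_update f y s j"
  by (induction j) auto

lemma measurable_iter_update:
  assumes f: "f \<in> My \<Otimes>\<^sub>M Ms \<rightarrow>\<^sub>M My" and y: "y \<in> space My"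
  shows "k \<le> m \<Longrightarrow> (\<lambda>s. iter_update f y s k) \<in> PiM {..<m} (\<lambda>_. Ms) \<rightarrow>\<^sub>M My"
proof (induction k)
  case 0
  show ?case using y by simp
next
  case (Suc k)
  have "(\<lambda>s. s k) \<in> PiM {..<m} (\<lambda>_. Ms) \<rightarrow>\<^sub>M Ms"
    using Suc.prems by (intro measurable_component_singleton) auto
  then have "(\<lambda>s. (iter_update f y s k, s k)) \<in> PiM {..<m} (\<lambda>_. Ms) \<rightarrow>\<^sub>M My \<Otimes>\<^sub>M Ms"
    using Suc by (intro measurable_Pair) auto
  from measurable_compose[OF this f] show ?case by simp
qed

lemma measurable_extend_sequence:
  "(\<lambda>(x, p). ((fst x)(k := snd p), fst p))
     \<in> (PiM {..<k} (\<lambda>_. Ms) \<Otimes>\<^sub>M Mh) \<Otimes>\<^sub>M (Mh \<Otimes>\<^sub>M Ms) \<rightarrow>\<^sub>M PiM {..<Suc k} (\<lambda>_. Ms) \<Otimes>\<^sub>M Mh"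
proof -
  have "(\<lambda>x. (fst (fst x), snd (snd x)))
      \<in> (PiM {..<k} (\<lambda>_. Ms) \<Otimes>\<^sub>M Mh) \<Otimes>\<^sub>M (Mh \<Otimes>\<^sub>M Ms) \<rightarrow>\<^sub>M PiM {..<k} (\<lambda>_. Ms) \<Otimes>\<^sub>M Ms"
    by measurable
  from measurable_compose[OF this measurable_add_dim[of k "{..<k}" "\<lambda>_. Ms"]]
  have extend: "(\<lambda>x. (fst (fst x))(k := snd (snd x)))
      \<in> (PiM {..<k} (\<lambda>_. Ms) \<Otimes>\<^sub>M Mh) \<Otimes>\<^sub>M (Mh \<Otimes>\<^sub>M Ms) \<rightarrow>\<^sub>M PiM {..<Suc k} (\<lambda>_. Ms)"
    by (simp add: lessThan_Suc)
  show ?thesis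
    unfolding split_beta' by (intro measurable_Pair extend) measurable
qed

lemma measurable_extend_fixed_sequence:
  assumes ss: "ss \<in> space (PiM {..<k} (\<lambda>_. Ms))"
  shows "(\<lambda>p. (ss(k := snd p), fst p)) \<in> Mh \<Otimes>\<^sub>M Ms \<rightarrow>\<^sub>M PiM {..<Suc k} (\<lambda>_. Ms) \<Otimes>\<^sub>M Mh"
proof -
  have "(\<lambda>p. (ss, snd p)) \<in> Mh \<Otimes>\<^sub>M Ms \<rightarrow>\<^sub>M PiM {..<k} (\<lambda>_. Ms) \<Otimes>\<^sub>M Ms"
    using ss by (intro measurable_Pair measurable_const) auto
  from measurable_compose[OF this measurable_add_dim[of k "{..<k}" "\<lambda>_. Ms"]]
  have "(\<lambda>p. ss(k := snd p)) \<in> Mh \<Otimes>\<^sub>M Ms \<rightarrow>\<^sub>M PiM {..<Suc k} (\<lambda>_. Ms)"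
    by (simp add: lessThan_Suc)
  then show ?thesis
    by (intro measurable_Pair) auto
qed

lemma consistent_BFI_return_emeasure_times:
  assumes f: "f \<in> My \<Otimes>\<^sub>M Ms \<rightarrow>\<^sub>M My"
    and cons: "consistent_BFI My Ms Mh (\<lambda>ys. return My (f ys)) psiH kappa"
    and y: "y \<in> space My" and C: "C \<in> sets Mh" and A: "A \<in> sets Ms"
  shows "emeasure (psi_SH psiH kappa y) (C \<times> A)
    = (\<integral>\<^sup>+ s \<in> A. emeasure (psiH (f (y, s))) C \<partial>psi_S Ms psiH kappa y)"
proof -
  have psiH: "psiH \<in> My \<rightarrow>\<^sub>M prob_algebra Mh" and kappa: "kappa \<in> Mh \<rightarrow>\<^sub>M prob_algebra (Mh \<Otimes>\<^sub>M Ms)"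
    using cons by (auto simp: consistent_BFI_def markov_kernel_def)
  have f_in: "f (y, s) \<in> space My" if "s \<in> A" for s
    using measurable_space[OF f] y sets.sets_into_space[OF A] that by (auto simp: space_pair_measure)
  have em: "(\<lambda>y'. emeasure (psiH y') C * indicator (space My) y') \<in> borel_measurable My"
    using measurable_compose[OF measurable_prob_algebraD[OF psiH] measurable_emeasure_subprob_algebra[OF C]]
    by measurable
  have sets_psi_SH: "sets (psi_SH psiH kappa y) = sets (Mh \<Otimes>\<^sub>M Ms)"
    using measurable_space[OF measurable_bind_prob_space[OF psiH kappa] y]
    by (simp add: space_prob_algebra psi_SH_def)
  have "emeasure (psi_SH psiH kappa y) (C \<times> A) = (\<integral>\<^sup>+ p. indicator (C \<times> A) p \<partial>psi_SH psiH kappa y)"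
    using C A sets_psi_SH by simp
  also have "\<dots> = (\<integral>\<^sup>+ p \<in> C \<times> A. emeasure (return My (f (y, snd p))) (space My) \<partial>psi_SH psiH kappa y)"
    using f_in by (intro nn_integral_cong) (auto split: split_indicator)
  also have "\<dots> = (\<integral>\<^sup>+ s \<in> A. (\<integral>\<^sup>+ y' \<in> space My. emeasure (psiH y') C \<partial>return My (f (y, s)))
      \<partial>psi_S Ms psiH kappa y)"
    using cons y C A by (simp add: consistent_BFI_def)
  also have "\<dots> = (\<integral>\<^sup>+ s \<in> A. emeasure (psiH (f (y, s))) C \<partial>psi_S Ms psiH kappa y)"
    using f_in nn_integral_return[OF _ em] by (auto intro!: nn_integral_cong split: split_indicator)
  finally show ?thesis .
qed

locale deterministic_filtering =
  fixes My :: "'y measure" and Ms :: "'s measure" and Mh :: "'h measure"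
    and f :: "'y \<times> 's \<Rightarrow> 'y"
    and psiH :: "'y \<Rightarrow> 'h measure" and kappa :: "'h \<Rightarrow> ('h \<times> 's) measure"
  assumes measurable_f[measurable]: "f \<in> My \<Otimes>\<^sub>M Ms \<rightarrow>\<^sub>M My"
    and measurable_psiH[measurable]: "psiH \<in> My \<rightarrow>\<^sub>M prob_algebra Mh"
    and measurable_kappa[measurable]: "kappa \<in> Mh \<rightarrow>\<^sub>M prob_algebra (Mh \<Otimes>\<^sub>M Ms)"
    and emeasure_psi_SH_times: "\<And>y C A. y \<in> space My \<Longrightarrow> C \<in> sets Mh \<Longrightarrow> A \<in> sets Ms \<Longrightarrow>
       emeasure (psi_SH psiH kappa y) (C \<times> A)
       = (\<integral>\<^sup>+ s \<in> A. emeasure (psiH (f (y, s))) C \<partial>psi_S Ms psiH kappa y)"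
begin

abbreviation Sn :: "nat \<Rightarrow> (nat \<Rightarrow> 's) measure" where
  "Sn k \<equiv> PiM {..<k} (\<lambda>_. Ms)"

abbreviation joint :: "nat \<Rightarrow> 'y \<Rightarrow> ((nat \<Rightarrow> 's) \<times> 'h) measure" where
  "joint k y \<equiv> joint_law Ms Mh psiH kappa k y"

abbreviation marginal :: "nat \<Rightarrow> 'y \<Rightarrow> (nat \<Rightarrow> 's) measure" where
  "marginal k y \<equiv> marginal_law Ms Mh psiH kappa k y"

abbreviation posterior_step :: "'y \<Rightarrow> 's \<Rightarrow> ('h \<times> 's) measure" where
  "posterior_step y s \<equiv> distr (psiH (f (y, s))) (Mh \<Otimes>\<^sub>M Ms) (\<lambda>h. (h, s))"

abbreviation extend_kernel :: "nat \<Rightarrow> (nat \<Rightarrow> 's) \<times> 'h \<Rightarrow> ((nat \<Rightarrow> 's) \<times> 'h) measure" where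
  "extend_kernel k \<equiv> \<lambda>(ss, h). distr (kappa h) (Sn (Suc k) \<Otimes>\<^sub>M Mh) (\<lambda>(h', s'). (ss(k := s'), h'))"

lemma measurable_psi_SH[measurable]: "psi_SH psiH kappa \<in> My \<rightarrow>\<^sub>M prob_algebra (Mh \<Otimes>\<^sub>M Ms)"
  unfolding psi_SH_def[abs_def] by (rule measurable_bind_prob_space[OF measurable_psiH measurable_kappa])

lemma measurable_psi_S[measurable]: "psi_S Ms psiH kappa \<in> My \<rightarrow>\<^sub>M prob_algebra Ms"
  unfolding psi_S_def[abs_def] by measurable

lemma prob_space_sets_psiH: "y \<in> space My \<Longrightarrow> prob_space (psiH y) \<and> sets (psiH y) = sets Mh"
  using measurable_space[OF measurable_psiH] by (auto simp: space_prob_algebra)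

lemma prob_space_sets_kappa:
  "h \<in> space Mh \<Longrightarrow> prob_space (kappa h) \<and> sets (kappa h) = sets (Mh \<Otimes>\<^sub>M Ms)"
  using measurable_space[OF measurable_kappa] by (auto simp: space_prob_algebra)

lemma prob_space_sets_psi_SH:
  "y \<in> space My \<Longrightarrow> prob_space (psi_SH psiH kappa y) \<and> sets (psi_SH psiH kappa y) = sets (Mh \<Otimes>\<^sub>M Ms)"
  using measurable_space[OF measurable_psi_SH] by (auto simp: space_prob_algebra)

lemma prob_space_sets_psi_S:
  "y \<in> space My \<Longrightarrow> prob_space (psi_S Ms psiH kappa y) \<and> sets (psi_S Ms psiH kappa y) = sets Ms"
  using measurable_space[OF measurable_psi_S] by (auto simp: space_prob_algebra)

lemma f_in_space: "y \<in> space My \<Longrightarrow> s \<in> space Ms \<Longrightarrow> f (y, s) \<in> space My"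
  using measurable_space[OF measurable_f] by (auto simp: space_pair_measure)

lemma measurable_posterior_step:
  assumes y: "y \<in> space My"
  shows "posterior_step y \<in> Ms \<rightarrow>\<^sub>M prob_algebra (Mh \<Otimes>\<^sub>M Ms)"
proof -
  have "(\<lambda>s. f (y, s)) \<in> Ms \<rightarrow>\<^sub>M My"
    using y by measurable
  from measurable_compose[OF this measurable_psiH]
  have [measurable]: "(\<lambda>s. psiH (f (y, s))) \<in> Ms \<rightarrow>\<^sub>M prob_algebra Mh"
    by simp
  show ?thesis by measurable
qed

lemma emeasure_posterior_step_times:
  assumes y: "y \<in> space My" and s: "s \<in> space Ms" and C: "C \<in> sets Mh" and A: "A \<in> sets Ms"
  shows "emeasure (posterior_step y s) (C \<times> A) = emeasure (psiH (f (y, s))) C * indicator A s"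
proof -
  have sets: "sets (psiH (f (y, s))) = sets Mh"
    using prob_space_sets_psiH[OF f_in_space[OF y s]] by simp
  then have m: "(\<lambda>h. (h, s)) \<in> psiH (f (y, s)) \<rightarrow>\<^sub>M Mh \<Otimes>\<^sub>M Ms"
    using s by (simp cong: measurable_cong_sets)
  have "(\<lambda>h. (h, s)) -` (C \<times> A) \<inter> space (psiH (f (y, s))) = (if s \<in> A then C else {})"
    using sets.sets_into_space[OF C] sets_eq_imp_space_eq[OF sets] by auto
  then show ?thesis
    using C A by (simp add: emeasure_distr[OF m] split: split_indicator)
qed

lemma psi_SH_eq_bind_posterior_step:
  assumes y: "y \<in> space My"
  shows "psi_SH psiH kappa y = psi_S Ms psiH kappa y \<bind> posterior_step y"
proof -
  let ?E = "{a \<times> b |a b. a \<in> sets Mh \<and> b \<in> sets Ms}"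
  let ?\<Omega> = "space Mh \<times> space Ms"
  have psi_S: "psi_S Ms psiH kappa y \<in> space (prob_algebra Ms)"
    using prob_space_sets_psi_S[OF y] by (simp add: space_prob_algebra)
  note sets_bind = sets_bind'[OF psi_S measurable_posterior_step[OF y]]
  show ?thesis
  proof (rule measure_eqI_generator_eq[OF Int_stable_pair_measure_generator[of Mh Ms],
        where \<Omega>="?\<Omega>" and A="\<lambda>_. ?\<Omega>"])
    show "?E \<subseteq> Pow ?\<Omega>"
      using sets.space_closed[of Mh] sets.space_closed[of Ms] by auto
    show "sets (psi_SH psiH kappa y) = sigma_sets ?\<Omega> ?E"
      using prob_space_sets_psi_SH[OF y] by (simp add: sets_pair_measure)
    show "sets (psi_S Ms psiH kappa y \<bind> posterior_step y) = sigma_sets ?\<Omega> ?E"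
      using sets_bind by (simp add: sets_pair_measure)
    show "range (\<lambda>_. ?\<Omega>) \<subseteq> ?E" "(\<Union>i::nat. ?\<Omega>) = ?\<Omega>"
      by auto
    show "emeasure (psi_SH psiH kappa y) ?\<Omega> \<noteq> \<infinity>" for i :: nat
    proof -
      have "space (psi_SH psiH kappa y) = ?\<Omega>"
        using prob_space_sets_psi_SH[OF y] sets_eq_imp_space_eq by (metis space_pair_measure)
      then show ?thesis
        using prob_space_sets_psi_SH[OF y] prob_space.emeasure_space_1 by fastforce
    qed
  next
    fix X assume "X \<in> ?E"
    then obtain C A where X: "X = C \<times> A" and C: "C \<in> sets Mh" and A: "A \<in> sets Ms"
      by blast
    have "emeasure (psi_S Ms psiH kappa y \<bind> posterior_step y) X
        = (\<integral>\<^sup>+ s. emeasure (posterior_step y s) (C \<times> A) \<partial>psi_S Ms psiH kappa y)"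
      unfolding X using C A
      by (intro emeasure_bind_prob_algebra[OF psi_S measurable_posterior_step[OF y]]) auto
    also have "\<dots> = (\<integral>\<^sup>+ s \<in> A. emeasure (psiH (f (y, s))) C \<partial>psi_S Ms psiH kappa y)"
      using sets_eq_imp_space_eq[of "psi_S Ms psiH kappa y" Ms] prob_space_sets_psi_S[OF y]
      by (intro nn_integral_cong) (simp add: emeasure_posterior_step_times[OF y _ C A])
    finally show "emeasure (psi_SH psiH kappa y) X = emeasure (psi_S Ms psiH kappa y \<bind> posterior_step y) X"
      using emeasure_psi_SH_times[OF y C A] X by simp
  qed
qed

lemma nn_integral_psiH_kappa:
  assumes y: "y \<in> space My" and g: "g \<in> borel_measurable (Mh \<Otimes>\<^sub>M Ms)"
  shows "(\<integral>\<^sup>+ h. \<integral>\<^sup>+ p. g p \<partial>kappa h \<partial>psiH y)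
    = (\<integral>\<^sup>+ s. \<integral>\<^sup>+ h. g (h, s) \<partial>psiH (f (y, s)) \<partial>psi_S Ms psiH kappa y)"
proof -
  have kappa: "kappa \<in> psiH y \<rightarrow>\<^sub>M subprob_algebra (Mh \<Otimes>\<^sub>M Ms)"
    using measurable_prob_algebraD[OF measurable_kappa] prob_space_sets_psiH[OF y]
    by (simp cong: measurable_cong_sets)
  have K: "posterior_step y \<in> psi_S Ms psiH kappa y \<rightarrow>\<^sub>M subprob_algebra (Mh \<Otimes>\<^sub>M Ms)"
    using measurable_prob_algebraD[OF measurable_posterior_step[OF y]] prob_space_sets_psi_S[OF y]
    by (simp cong: measurable_cong_sets)
  have "(\<integral>\<^sup>+ h. \<integral>\<^sup>+ p. g p \<partial>kappa h \<partial>psiH y) = (\<integral>\<^sup>+ p. g p \<partial>psi_SH psiH kappa y)"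
    unfolding psi_SH_def using nn_integral_bind[OF g kappa] by simp
  also have "\<dots> = (\<integral>\<^sup>+ s. \<integral>\<^sup>+ p. g p \<partial>posterior_step y s \<partial>psi_S Ms psiH kappa y)"
    unfolding psi_SH_eq_bind_posterior_step[OF y] using nn_integral_bind[OF g K] by simp
  also have "\<dots> = (\<integral>\<^sup>+ s. \<integral>\<^sup>+ h. g (h, s) \<partial>psiH (f (y, s)) \<partial>psi_S Ms psiH kappa y)"
  proof (rule nn_integral_cong)
    fix s assume "s \<in> space (psi_S Ms psiH kappa y)"
    then have s: "s \<in> space Ms"
      using prob_space_sets_psi_S[OF y] sets_eq_imp_space_eq by blast
    have "(\<lambda>h. (h, s)) \<in> psiH (f (y, s)) \<rightarrow>\<^sub>M Mh \<Otimes>\<^sub>M Ms"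
      using prob_space_sets_psiH[OF f_in_space[OF y s]] s by (simp cong: measurable_cong_sets)
    then show "(\<integral>\<^sup>+ p. g p \<partial>posterior_step y s) = (\<integral>\<^sup>+ h. g (h, s) \<partial>psiH (f (y, s)))"
      using nn_integral_distr g by simp
  qed
  finally show ?thesis .
qed

lemma iter_update_in_space: "y \<in> space My \<Longrightarrow> s \<in> space (Sn k) \<Longrightarrow> iter_update f y s k \<in> space My"
  using measurable_space[OF measurable_iter_update[OF measurable_f, of y k k]] by auto

lemma measurable_extend_kernel:
  "extend_kernel k \<in> Sn k \<Otimes>\<^sub>M Mh \<rightarrow>\<^sub>M prob_algebra (Sn (Suc k) \<Otimes>\<^sub>M Mh)"
proof -
  have eq: "extend_kernel k
      = (\<lambda>x. distr (kappa (snd x)) (Sn (Suc k) \<Otimes>\<^sub>M Mh) (\<lambda>p. ((fst x)(k := snd p), fst p)))"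
    by (auto simp: fun_eq_iff split_beta')
  have "(\<lambda>x. kappa (snd x)) \<in> Sn k \<Otimes>\<^sub>M Mh \<rightarrow>\<^sub>M prob_algebra (Mh \<Otimes>\<^sub>M Ms)"
    by measurable
  then show ?thesis
    unfolding eq by (rule measurable_distr_prob_space2[OF _ measurable_extend_sequence])
qed

lemma joint_law_in_prob_algebra:
  "y \<in> space My \<Longrightarrow> joint k y \<in> space (prob_algebra (Sn k \<Otimes>\<^sub>M Mh))"
proof (induction k)
  case 0
  have "(\<lambda>_. undefined) \<in> space (Sn 0)"
    by (simp add: space_PiM PiE_def extensional_def)
  then have "(\<lambda>h. (\<lambda>_. undefined, h)) \<in> psiH y \<rightarrow>\<^sub>M Sn 0 \<Otimes>\<^sub>M Mh"
    using prob_space_sets_psiH[OF 0] by (simp cong: measurable_cong_sets)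
  then have "prob_space (joint 0 y)"
    using prob_space_sets_psiH[OF 0] by (simp add: prob_space.prob_space_distr)
  then show ?case by (simp add: space_prob_algebra)
next
  case (Suc k)
  show ?case
    using prob_space_bind'[OF Suc.IH[OF Suc.prems] measurable_extend_kernel]
      sets_bind'[OF Suc.IH[OF Suc.prems] measurable_extend_kernel]
    by (simp add: space_prob_algebra)
qed

lemma sets_joint_law: "y \<in> space My \<Longrightarrow> sets (joint k y) = sets (Sn k \<Otimes>\<^sub>M Mh)"
  using joint_law_in_prob_algebra[of y k] by (simp add: space_prob_algebra)

lemma space_marginal_law: "space (marginal k y) = space (Sn k)"
  by (simp add: marginal_law_def)

lemma nn_integral_joint_law_Suc:
  assumes y: "y \<in> space My"
    and IH: "\<And>g. g \<in> borel_measurable (Sn k \<Otimes>\<^sub>M Mh) \<Longrightarrow>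
       (\<integral>\<^sup>+ x. g x \<partial>joint k y) = (\<integral>\<^sup>+ s. \<integral>\<^sup>+ h. g (s, h) \<partial>psiH (iter_update f y s k) \<partial>marginal k y)"
    and g: "g \<in> borel_measurable (Sn (Suc k) \<Otimes>\<^sub>M Mh)"
  shows "(\<integral>\<^sup>+ x. g x \<partial>joint (Suc k) y) =
    (\<integral>\<^sup>+ s. \<integral>\<^sup>+ s'. \<integral>\<^sup>+ h. g (s(k := s'), h) \<partial>psiH (f (iter_update f y s k, s'))
       \<partial>psi_S Ms psiH kappa (iter_update f y s k) \<partial>marginal k y)"
proof -
  let ?G = "\<lambda>x. \<integral>\<^sup>+ p. g ((fst x)(k := snd p), fst p) \<partial>kappa (snd x)"
  have K: "extend_kernel k \<in> joint k y \<rightarrow>\<^sub>M subprob_algebra (Sn (Suc k) \<Otimes>\<^sub>M Mh)"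
    using measurable_prob_algebraD[OF measurable_extend_kernel] sets_joint_law[OF y]
    by (simp cong: measurable_cong_sets)
  have "(\<integral>\<^sup>+ x. g x \<partial>joint (Suc k) y) = (\<integral>\<^sup>+ z. \<integral>\<^sup>+ x. g x \<partial>extend_kernel k z \<partial>joint k y)"
    using nn_integral_bind[OF g K] by simp
  also have "\<dots> = (\<integral>\<^sup>+ z. ?G z \<partial>joint k y)"
  proof (rule nn_integral_cong)
    fix z assume "z \<in> space (joint k y)"
    then obtain ss h where z: "z = (ss, h)" and ss: "ss \<in> space (Sn k)" and h: "h \<in> space Mh"
      using sets_eq_imp_space_eq[OF sets_joint_law[OF y]] by (cases z) (auto simp: space_pair_measure)
    have "(\<lambda>p. (ss(k := snd p), fst p)) \<in> kappa h \<rightarrow>\<^sub>M Sn (Suc k) \<Otimes>\<^sub>M Mh"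
      using measurable_extend_fixed_sequence[OF ss] prob_space_sets_kappa[OF h]
      by (simp cong: measurable_cong_sets)
    from nn_integral_distr[OF this] show "(\<integral>\<^sup>+ x. g x \<partial>extend_kernel k z) = ?G z"
      unfolding z using g by (simp add: case_prod_beta')
  qed
  also have "\<dots> = (\<integral>\<^sup>+ s. \<integral>\<^sup>+ h. ?G (s, h) \<partial>psiH (iter_update f y s k) \<partial>marginal k y)"
  proof (rule IH)
    have "(\<lambda>(x, p). g ((fst x)(k := snd p), fst p))
        \<in> borel_measurable ((Sn k \<Otimes>\<^sub>M Mh) \<Otimes>\<^sub>M (Mh \<Otimes>\<^sub>M Ms))"
      using measurable_compose[OF measurable_extend_sequence g] by (simp add: split_beta')
    moreover have "(\<lambda>x. kappa (snd x)) \<in> Sn k \<Otimes>\<^sub>M Mh \<rightarrow>\<^sub>M subprob_algebra (Mh \<Otimes>\<^sub>M Ms)"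
      by (intro measurable_prob_algebraD) measurable
    ultimately show "?G \<in> borel_measurable (Sn k \<Otimes>\<^sub>M Mh)"
      by (rule nn_integral_measurable_subprob_algebra2)
  qed
  also have "\<dots> = (\<integral>\<^sup>+ s. \<integral>\<^sup>+ s'. \<integral>\<^sup>+ h. g (s(k := s'), h) \<partial>psiH (f (iter_update f y s k, s'))
       \<partial>psi_S Ms psiH kappa (iter_update f y s k) \<partial>marginal k y)"
  proof (rule nn_integral_cong)
    fix s assume "s \<in> space (marginal k y)"
    then have s: "s \<in> space (Sn k)" by (simp add: space_marginal_law)
    let ?y = "iter_update f y s k"
    have y': "?y \<in> space My" by (rule iter_update_in_space[OF y s])
    have gs: "(\<lambda>p. g (s(k := snd p), fst p)) \<in> borel_measurable (Mh \<Otimes>\<^sub>M Ms)"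
      using measurable_compose[OF measurable_extend_fixed_sequence[OF s] g] by simp
    show "(\<integral>\<^sup>+ h. ?G (s, h) \<partial>psiH ?y)
      = (\<integral>\<^sup>+ s'. \<integral>\<^sup>+ h. g (s(k := s'), h) \<partial>psiH (f (?y, s')) \<partial>psi_S Ms psiH kappa ?y)"
      using nn_integral_psiH_kappa[OF y' gs] by simp
  qed
  finally show ?thesis .
qed

lemma nn_integral_joint_law_0:
  assumes y: "y \<in> space My" and g: "g \<in> borel_measurable (Sn 0 \<Otimes>\<^sub>M Mh)"
  shows "(\<integral>\<^sup>+ x. g x \<partial>joint 0 y) = (\<integral>\<^sup>+ s. \<integral>\<^sup>+ h. g (s, h) \<partial>psiH (iter_update f y s 0) \<partial>marginal 0 y)"
proof -
  let ?u = "\<lambda>_::nat. undefined :: 's"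
  interpret prob_space "psiH y"
    using prob_space_sets_psiH[OF y] by simp
  have u: "?u \<in> space (Sn 0)"
    by (simp add: space_PiM PiE_def extensional_def)
  have pair: "(\<lambda>h. (?u, h)) \<in> psiH y \<rightarrow>\<^sub>M Sn 0 \<Otimes>\<^sub>M Mh"
    using u prob_space_sets_psiH[OF y] by (simp cong: measurable_cong_sets)
  have const: "(\<lambda>h. ?u) \<in> psiH y \<rightarrow>\<^sub>M Sn 0"
    using u prob_space_sets_psiH[OF y] by (simp cong: measurable_cong_sets)
  have marginal: "marginal 0 y = distr (psiH y) (Sn 0) (\<lambda>h. ?u)"
    unfolding marginal_law_def joint_law.simps
    using distr_distr[OF measurable_fst pair] by (simp add: comp_def)
  have "(\<lambda>s. \<integral>\<^sup>+ h. g (s, h) \<partial>psiH y) \<in> borel_measurable (Sn 0)"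
    using g measurable_prob_algebraD[OF measurable_psiH] y
    by (intro nn_integral_measurable_subprob_algebra2[where f="\<lambda>s h. g (s, h)"]) auto
  then have "(\<integral>\<^sup>+ s. \<integral>\<^sup>+ h. g (s, h) \<partial>psiH (iter_update f y s 0) \<partial>marginal 0 y)
      = (\<integral>\<^sup>+ h'. \<integral>\<^sup>+ h. g (?u, h) \<partial>psiH y \<partial>psiH y)"
    unfolding marginal using nn_integral_distr[OF const] by simp
  also have "\<dots> = (\<integral>\<^sup>+ x. g x \<partial>joint 0 y)"
    using nn_integral_distr[OF pair] g by (simp add: emeasure_space_1)
  finally show ?thesis ..
qed

lemma nn_integral_joint_law:
  assumes y: "y \<in> space My"
  shows "g \<in> borel_measurable (Sn k \<Otimes>\<^sub>M Mh) \<Longrightarrow>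
    (\<integral>\<^sup>+ x. g x \<partial>joint k y) = (\<integral>\<^sup>+ s. \<integral>\<^sup>+ h. g (s, h) \<partial>psiH (iter_update f y s k) \<partial>marginal k y)"
proof (induction k arbitrary: g)
  case 0
  then show ?case by (rule nn_integral_joint_law_0[OF y])
next
  case (Suc k)
  \<comment> \<open>Writing the right-hand side as an integral of \<open>\<Phi> \<circ> fst\<close> against the joint law, both sides
    reduce to the same iterated integral, because \<open>f^(k+1)(y, s(k := s')) = f(f^k(y, s), s')\<close>.\<close>
  let ?\<Phi> = "\<lambda>t. \<integral>\<^sup>+ h. g (t, h) \<partial>psiH (iter_update f y t (Suc k))"
  have "(\<lambda>t. psiH (iter_update f y t (Suc k))) \<in> Sn (Suc k) \<rightarrow>\<^sub>M subprob_algebra Mh"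
    using measurable_compose[OF measurable_iter_update[OF measurable_f y, of "Suc k" "Suc k"]
        measurable_prob_algebraD[OF measurable_psiH]] by simp
  then have \<Phi>: "?\<Phi> \<in> borel_measurable (Sn (Suc k))"
    using Suc.prems by (intro nn_integral_measurable_subprob_algebra2[where f="\<lambda>t h. g (t, h)"]) auto
  have fst: "fst \<in> joint (Suc k) y \<rightarrow>\<^sub>M Sn (Suc k)"
    by (subst measurable_cong_sets[OF sets_joint_law[OF y] refl]) simp
  have "(\<integral>\<^sup>+ t. ?\<Phi> t \<partial>marginal (Suc k) y) = (\<integral>\<^sup>+ x. ?\<Phi> (fst x) \<partial>joint (Suc k) y)"
    unfolding marginal_law_def using nn_integral_distr[OF fst] \<Phi> by simp
  also have "\<dots> = (\<integral>\<^sup>+ s. \<integral>\<^sup>+ s'. \<integral>\<^sup>+ h. ?\<Phi> (s(k := s')) \<partial>psiH (f (iter_update f y s k, s'))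
       \<partial>psi_S Ms psiH kappa (iter_update f y s k) \<partial>marginal k y)"
    using nn_integral_joint_law_Suc[OF y Suc.IH, of "\<lambda>x. ?\<Phi> (fst x)"] \<Phi> by simp
  also have "\<dots> = (\<integral>\<^sup>+ s. \<integral>\<^sup>+ s'. \<integral>\<^sup>+ h. g (s(k := s'), h) \<partial>psiH (f (iter_update f y s k, s'))
       \<partial>psi_S Ms psiH kappa (iter_update f y s k) \<partial>marginal k y)"
  proof (rule nn_integral_cong)
    fix s assume "s \<in> space (marginal k y)"
    then have y': "iter_update f y s k \<in> space My"
      using iter_update_in_space[OF y] by (simp add: space_marginal_law)
    show "(\<integral>\<^sup>+ s'. \<integral>\<^sup>+ h. ?\<Phi> (s(k := s')) \<partial>psiH (f (iter_update f y s k, s'))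
        \<partial>psi_S Ms psiH kappa (iter_update f y s k))
      = (\<integral>\<^sup>+ s'. \<integral>\<^sup>+ h. g (s(k := s'), h) \<partial>psiH (f (iter_update f y s k, s'))
        \<partial>psi_S Ms psiH kappa (iter_update f y s k))"
    proof (rule nn_integral_cong)
      fix s' assume "s' \<in> space (psi_S Ms psiH kappa (iter_update f y s k))"
      then have "f (iter_update f y s k, s') \<in> space My"
        using f_in_space[OF y'] prob_space_sets_psi_S[OF y'] sets_eq_imp_space_eq by blast
      then interpret prob_space "psiH (f (iter_update f y s k, s'))"
        using prob_space_sets_psiH by simp
      show "(\<integral>\<^sup>+ h. ?\<Phi> (s(k := s')) \<partial>psiH (f (iter_update f y s k, s')))
        = (\<integral>\<^sup>+ h. g (s(k := s'), h) \<partial>psiH (f (iter_update f y s k, s')))"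
        by (simp add: iter_update_fun_upd emeasure_space_1)
    qed
  qed
  also have "\<dots> = (\<integral>\<^sup>+ x. g x \<partial>joint (Suc k) y)"
    using nn_integral_joint_law_Suc[OF y Suc.IH Suc.prems] by simp
  finally show ?case by simp
qed

lemma emeasure_joint_law_times:
  assumes y: "y \<in> space My" and A: "A \<in> sets (Sn k)" and C: "C \<in> sets Mh"
  shows "emeasure (joint k y) (A \<times> C)
    = (\<integral>\<^sup>+ s \<in> A. emeasure (psiH (iter_update f y s k)) C \<partial>marginal k y)"
proof -
  have AC: "A \<times> C \<in> sets (Sn k \<Otimes>\<^sub>M Mh)"
    using A C by simp
  have "emeasure (joint k y) (A \<times> C) = (\<integral>\<^sup>+ x. indicator (A \<times> C) x \<partial>joint k y)"
    using AC sets_joint_law[OF y] by simp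
  also have "\<dots> = (\<integral>\<^sup>+ s. \<integral>\<^sup>+ h. indicator (A \<times> C) (s, h) \<partial>psiH (iter_update f y s k) \<partial>marginal k y)"
    using AC by (intro nn_integral_joint_law[OF y]) simp
  also have "\<dots> = (\<integral>\<^sup>+ s \<in> A. emeasure (psiH (iter_update f y s k)) C \<partial>marginal k y)"
  proof (rule nn_integral_cong)
    fix s assume "s \<in> space (marginal k y)"
    then have "C \<in> sets (psiH (iter_update f y s k))"
      using prob_space_sets_psiH[OF iter_update_in_space[OF y]] C by (simp add: space_marginal_law)
    then have "(\<integral>\<^sup>+ h. indicator A s * indicator C h \<partial>psiH (iter_update f y s k))
        = indicator A s * emeasure (psiH (iter_update f y s k)) C"
      by (rule nn_integral_cmult_indicator)
    then show "(\<integral>\<^sup>+ h. indicator (A \<times> C) (s, h) \<partial>psiH (iter_update f y s k))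
        = emeasure (psiH (iter_update f y s k)) C * indicator A s"
      by (simp add: indicator_times mult.commute)
  qed
  finally show ?thesis .
qed

end

theorem mainTheorem2:
  fixes My :: "'y measure" and Ms :: "'s measure" and Mh :: "'h measure"
    and f :: "'y \<times> 's \<Rightarrow> 'y"
    and psiH :: "'y \<Rightarrow> 'h measure" and kappa :: "'h \<Rightarrow> ('h \<times> 's) measure"
    and n :: nat
  assumes "standard_borel My" and "standard_borel Ms" and "standard_borel Mh"
    and "f \<in> measurable (My \<Otimes>\<^sub>M Ms) My"
    and "consistent_BFI My Ms Mh (\<lambda>ys. return My (f ys)) psiH kappa"
    and "n \<ge> 1"
  shows "\<forall>y\<in>space My. \<forall>A\<in>sets (PiM {..<n} (\<lambda>_. Ms)). \<forall>C\<in>sets Mh.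
           emeasure (joint_law Ms Mh psiH kappa n y) (A \<times> C)
           = (\<integral>\<^sup>+ s \<in> A. emeasure (psiH (iter_update f y s n)) C \<partial>marginal_law Ms Mh psiH kappa n y)"
proof -
  interpret deterministic_filtering My Ms Mh f psiH kappa
  proof
    show "f \<in> My \<Otimes>\<^sub>M Ms \<rightarrow>\<^sub>M My" by fact
    show "psiH \<in> My \<rightarrow>\<^sub>M prob_algebra Mh" "kappa \<in> Mh \<rightarrow>\<^sub>M prob_algebra (Mh \<Otimes>\<^sub>M Ms)"
      using assms(5) by (auto simp: consistent_BFI_def markov_kernel_def)
    show "emeasure (psi_SH psiH kappa y) (C \<times> A)
        = (\<integral>\<^sup>+ s \<in> A. emeasure (psiH (f (y, s))) C \<partial>psi_S Ms psiH kappa y)"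
      if "y \<in> space My" "C \<in> sets Mh" "A \<in> sets Ms" for y C A
      using consistent_BFI_return_emeasure_times[OF assms(4,5)] that by blast
  qed
  show ?thesis
    using emeasure_joint_law_times by blast
qed

end
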